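(* Let $(\rho,u,f_H)$ be an optimal triple on $[0,T]$ for the pressure-less Euler control problem, and assume that for every $a\in[0,T)$ there exists an admissible triple $(\tilde\rho,\tilde u,\tilde f_H)$ on $[a,T]$ with $\tilde\rho(a)=\rho(a)$, $\tilde u(a)=u(a)$ and $\tilde f_H=-\lambda^{-1/2}(\tilde u-\bar v)$. Then for all $0\le t_1\le t_2\le T$, $$\int_{\mathbb R^D}\rho(t_2,x)|u(t_2,x)-\bar v|^2dx\le C_\lambda\int_{\mathbb R^D}\rho(t_1,x)|u(t_1,x)-\bar v|^2dx,$$ where $C_\lambda=1+\lambda^{-1/2}$ if $\lambda\le1$ and $C_\lambda=1+\lambda^{1/2}$ if $\lambda>1$.
   Context: Fix $D\ge1$, $T>0$, $\lambda>0$, $\bar v\in\mathbb R^D$, and an interaction kernel $\Psi:\mathbb R^D\times\mathbb R^D\to\mathbb R$ which is Lipschitz continuous, symmetric ($\Psi(x,y)=\Psi(y,x)$), nonnegative and bounded. For $0\le a<T$, an admissible triple on $[a,T]$ for the controlled pressure-less Euler system is $(\rho,u,f_H)$ with $\rho\in C^1([a,T]\times\mathbb R^D;[0,\infty))$, $u\in C^1([a,T]\times\mathbb R^D;\mathbb R^D)$, $f_H\in C([a,T]\times\mathbb R^D;\mathbb R^D)$, such that there is a compact set $K\subset\mathbb R^D$ with $\operatorname{supp}\rho(t,\cdot)\subset K$ for all $t$, and which satisfies classically $\partial_t\rho+\nabla_x\cdot(\rho u)=0$, $\partial_t(\rho u)+\nabla_x\cdot(\rho u\otimes u)=Q_1+\rho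 f_H$, where $Q_1(t,x)=\int_{\mathbb R^D}\Psi(x,y)\rho(t,x)\rho(t,y)\big(u(t,y)-u(t,x)\big)dy$. Its cost on $[a,T]$ is $J^{[a,T]}_{H_1}=\int_a^T\int_{\mathbb R^D}\rho|u-\bar v|^2+\lambda\rho|f_H|^2\,dx\,dt$. An admissible triple on $[0,T]$ is optimal if for every $a\in[0,T)$ its restriction to $[a,T]$ minimizes $J^{[a,T]}_{H_1}$ among all admissible triples on $[a,T]$ with the same values of $(\rho,u)$ at time $a$. *)

theory Defs
  imports "HOL-Analysis.Analysis"
begin

text \<open>Functions of (t,x) on [a,T] x R^D are curried: g t x.  R^D is an arbitrary
  Euclidean space 'a (dimension DIM('a) >= 1).\<close>

definition C1_on :: "(real \<times> 'a::euclidean_space) set \<Rightarrow> (real \<times> 'a \<Rightarrow> 'b::real_normed_vector) \<Rightarrow> bool" where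
  "C1_on S g \<longleftrightarrow> (\<exists>g'. (\<forall>z\<in>S. (g has_derivative blinfun_apply (g' z)) (at z within S))
                         \<and> continuous_on S g')"

definition dt :: "real \<Rightarrow> real \<Rightarrow> (real \<Rightarrow> 'b::real_normed_vector) \<Rightarrow> real \<Rightarrow> 'b" where
  "dt a T g t = vector_derivative g (at t within {a..T})"

definition divx :: "('a::euclidean_space \<Rightarrow> 'a) \<Rightarrow> 'a \<Rightarrow> real" where
  "divx w x = (\<Sum>b\<in>Basis. frechet_derivative w (at x) b \<bullet> b)"

text \<open>divergence of the matrix field rho u (x) u: i-th component sum_j d_j (rho u_i u_j)\<close>
definition div_tensor :: "('a::euclidean_space \<Rightarrow> real) \<Rightarrow> ('a \<Rightarrow> 'a) \<Rightarrow> 'a \<Rightarrow> 'a" where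
  "div_tensor r w x = (\<Sum>b\<in>Basis. frechet_derivative (\<lambda>y. (r y * (w y \<bullet> b)) *\<^sub>R w y) (at x) b)"

definition Q1 :: "('a::euclidean_space \<Rightarrow> 'a \<Rightarrow> real) \<Rightarrow> (real \<Rightarrow> 'a \<Rightarrow> real) \<Rightarrow> (real \<Rightarrow> 'a \<Rightarrow> 'a) \<Rightarrow> real \<Rightarrow> 'a \<Rightarrow> 'a" where
  "Q1 \<Psi> \<rho> u t x = (LINT y|lborel. (\<Psi> x y * \<rho> t x * \<rho> t y) *\<^sub>R (u t y - u t x))"

definition admissible ::
  "('a::euclidean_space \<Rightarrow> 'a \<Rightarrow> real) \<Rightarrow> real \<Rightarrow> real \<Rightarrow> (real \<Rightarrow> 'a \<Rightarrow> real) \<Rightarrow> (real \<Rightarrow> 'a \<Rightarrow> 'a) \<Rightarrow> (real \<Rightarrow> 'a \<Rightarrow> 'a) \<Rightarrow> bool" where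
  "admissible \<Psi> T a \<rho> u f \<longleftrightarrow>
     0 \<le> a \<and> a < T \<and>
     C1_on ({a..T} \<times> UNIV) (\<lambda>(t,x). \<rho> t x) \<and>
     (\<forall>t\<in>{a..T}. \<forall>x. 0 \<le> \<rho> t x) \<and>
     C1_on ({a..T} \<times> UNIV) (\<lambda>(t,x). u t x) \<and>
     continuous_on ({a..T} \<times> UNIV) (\<lambda>(t,x). f t x) \<and>
     (\<exists>K. compact K \<and> (\<forall>t\<in>{a..T}. closure {x. \<rho> t x \<noteq> 0} \<subseteq> K)) \<and>
     (\<forall>t\<in>{a..T}. \<forall>x.
        dt a T (\<lambda>s. \<rho> s x) t + divx (\<lambda>y. \<rho> t y *\<^sub>R u t y) x = 0 \<and>
        dt a T (\<lambda>s. \<rho> s x *\<^sub>R u s x) t + div_tensor (\<rho> t) (u t) x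
          = Q1 \<Psi> \<rho> u t x + \<rho> t x *\<^sub>R f t x)"

definition cost :: "real \<Rightarrow> 'a::euclidean_space \<Rightarrow> real \<Rightarrow> real \<Rightarrow> (real \<Rightarrow> 'a \<Rightarrow> real) \<Rightarrow> (real \<Rightarrow> 'a \<Rightarrow> 'a) \<Rightarrow> (real \<Rightarrow> 'a \<Rightarrow> 'a) \<Rightarrow> real" where
  "cost lam vbar T a \<rho> u f =
     (LINT t:{a..T}|lborel. (LINT x|lborel. \<rho> t x * (norm (u t x - vbar))\<^sup>2 + lam * \<rho> t x * (norm (f t x))\<^sup>2))"

definition optimal ::
  "('a::euclidean_space \<Rightarrow> 'a \<Rightarrow> real) \<Rightarrow> real \<Rightarrow> 'a \<Rightarrow> real \<Rightarrow> (real \<Rightarrow> 'a \<Rightarrow> real) \<Rightarrow> (real \<Rightarrow> 'a \<Rightarrow> 'a) \<Rightarrow> (real \<Rightarrow> 'a \<Rightarrow> 'a) \<Rightarrow> bool" where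
  "optimal \<Psi> lam vbar T \<rho> u f \<longleftrightarrow>
     admissible \<Psi> T 0 \<rho> u f \<and>
     (\<forall>a\<in>{0..<T}. \<forall>\<rho>' u' f'. admissible \<Psi> T a \<rho>' u' f' \<and> \<rho>' a = \<rho> a \<and> u' a = u a \<longrightarrow>
        cost lam vbar T a \<rho> u f \<le> cost lam vbar T a \<rho>' u' f')"

definition C_lambda :: "real \<Rightarrow> real" where
  "C_lambda lam = (if lam \<le> 1 then 1 + 1 / sqrt lam else 1 + sqrt lam)"

end

theory Submission
  imports Defs
begin

(* Let E(t) be the integral of rho |u - vbar|^2 and F(t) that of rho |f_H|^2.  Testing the
   momentum equation against u - vbar and using the continuity equation, E' equals
   2 int rho (u - vbar).f_H plus 2 int (u - vbar).Q_1 plus the integral of a divergence.  The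
   divergence integrates to zero because rho has compact support, and the alignment term is
   nonpositive after symmetrising in (x,y).  Young's inequality with weight c = lambda^(-1/2)
   then gives E' <= c (E + lambda F), hence E(t2) <= E(t1) + c J(t1), where J(t1) is the optimal
   cost from time t1.  For the feedback control f_H = -c (u - vbar) the same identity gives
   E' <= -2 c E, so the cost of the feedback triple, 2 int E, is at most E(t1) / c.  Optimality
   bounds J(t1) by that cost, so E(t2) <= 2 E(t1) <= C_lambda E(t1). *)

lemma DERIV_within_Icc_nonpos_imp_decreasing:
  fixes g g' :: "real \<Rightarrow> real"
  assumes "p \<le> q"
    and "\<And>t. t \<in> {p..q} \<Longrightarrow> (g has_real_derivative g' t) (at t within {p..q})"
    and "\<And>t. t \<in> {p..q} \<Longrightarrow> g' t \<le> 0"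
  shows "g q \<le> g p"
proof (rule DERIV_nonpos_imp_decreasing_open[OF \<open>p \<le> q\<close>])
  show "continuous_on {p..q} g"
    using assms(2) by (meson DERIV_continuous continuous_on_eq_continuous_within)
  show "\<exists>y. DERIV g t :> y \<and> y \<le> 0" if "p < t" "t < q" for t
    using assms(2,3)[of t] that at_within_Icc_at[of p t q] by auto
qed

lemma integral_nonpos:
  fixes g :: "'b \<Rightarrow> real"
  assumes "\<And>x. g x \<le> 0"
  shows "integral\<^sup>L M g \<le> 0"
  using Bochner_Integration.integral_nonneg[where f="\<lambda>x. - g x" and M=M] assms by simp

definition C1_derivative ::
  "(real \<times> 'a::euclidean_space) set \<Rightarrow> (real \<times> 'a \<Rightarrow> 'b::real_normed_vector) \<Rightarrow> real \<times> 'a \<Rightarrow> (real \<times> 'a) \<Rightarrow>\<^sub>L 'b"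
  where "C1_derivative S g =
    (SOME g'. (\<forall>z\<in>S. (g has_derivative blinfun_apply (g' z)) (at z within S)) \<and> continuous_on S g')"

lemma C1_derivative:
  assumes "C1_on S g"
  shows "\<And>z. z \<in> S \<Longrightarrow> (g has_derivative blinfun_apply (C1_derivative S g z)) (at z within S)"
    and "continuous_on S (C1_derivative S g)"
  using someI_ex[OF assms[unfolded C1_on_def]] unfolding C1_derivative_def by auto

lemma C1_on_imp_continuous_on: "C1_on S g \<Longrightarrow> continuous_on S g"
  unfolding C1_on_def continuous_on_eq_continuous_within
  using has_derivative_continuous by blast

lemma has_derivative_Times_partials:
  fixes g :: "real \<Rightarrow> 'a::real_normed_vector \<Rightarrow> 'b::real_normed_vector"
  assumes g: "((\<lambda>(t,x). g t x) has_derivative G) (at (t,x) within I \<times> UNIV)" and t: "t \<in> I"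
  shows "((\<lambda>s. g s x) has_vector_derivative G (1,0)) (at t within I)"
    and "((\<lambda>y. g t y) has_derivative (\<lambda>h. G (0,h))) (at x)"
proof -
  have "((\<lambda>s. (s, x)) has_derivative (\<lambda>h. (h, 0))) (at t within I)"
    by (auto intro!: derivative_eq_intros)
  moreover have "((\<lambda>(t,x). g t x) has_derivative G) (at (t,x) within (\<lambda>s. (s, x)) ` I)"
    using g by (rule has_derivative_subset) auto
  ultimately have "((\<lambda>s. g s x) has_derivative (\<lambda>h. G (h, 0))) (at t within I)"
    using has_derivative_in_compose[of "\<lambda>s. (s, x)" "\<lambda>h. (h, 0)" t I "\<lambda>(t,x). g t x" G]
    by (simp only: prod.case)
  moreover have "(\<lambda>h. G (h, 0)) = (\<lambda>h. h *\<^sub>R G (1, 0))"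
  proof
    fix h :: real
    have "(h, 0) = h *\<^sub>R ((1, 0) :: real \<times> 'a)" by simp
    then show "G (h, 0) = h *\<^sub>R G (1, 0)"
      using linear_scale[OF has_derivative_linear[OF g]] by metis
  qed
  ultimately show "((\<lambda>s. g s x) has_vector_derivative G (1,0)) (at t within I)"
    unfolding has_vector_derivative_def by (rule has_derivative_eq_rhs)
  have "((\<lambda>y. (t, y)) has_derivative (\<lambda>h. (0, h))) (at x)"
    by (auto intro!: derivative_eq_intros)
  moreover have "((\<lambda>(t,x). g t x) has_derivative G) (at (t,x) within range (\<lambda>y. (t, y)))"
    using g by (rule has_derivative_subset) (use t in auto)
  ultimately show "((\<lambda>y. g t y) has_derivative (\<lambda>h. G (0,h))) (at x)"
    using has_derivative_in_compose[of "\<lambda>y. (t, y)" "\<lambda>h. (0, h)" x UNIV "\<lambda>(t,x). g t x" G]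
    by (simp only: prod.case)
qed

lemma integrable_continuous_compact_support:
  fixes g :: "'a::euclidean_space \<Rightarrow> 'b::{banach,second_countable_topology}"
  assumes "continuous_on UNIV g" "compact S" "\<And>x. x \<notin> S \<Longrightarrow> g x = 0"
  shows "integrable lborel g"
proof -
  have "integrable lborel (\<lambda>x. indicator S x *\<^sub>R g x)"
    by (rule borel_integrable_compact[OF assms(2) continuous_on_subset[OF assms(1)]]) auto
  moreover have "(\<lambda>x. indicator S x *\<^sub>R g x) = g"
    using assms(3) by (auto simp: indicator_def)
  ultimately show ?thesis by simp
qed

lemma integral_eq_integral_UNIV_if_vanishing:
  fixes g :: "'a::euclidean_space \<Rightarrow> 'b::banach"
  assumes "\<And>x. x \<notin> S \<Longrightarrow> g x = 0"
  shows "integral S g = integral UNIV g"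
proof -
  have "(\<lambda>x. if x \<in> S then g x else 0) = g" using assms by auto
  then show ?thesis using integral_restrict_UNIV[of S g] by simp
qed

(* The margin 1 leaves room for the unit translations in integral_directional_derivative_eq_0. *)
definition support_box :: "real \<Rightarrow> 'a::euclidean_space set" where
  "support_box R = cbox (-(R+1) *\<^sub>R One) ((R+1) *\<^sub>R One)"

lemma mem_support_box:
  assumes "norm (x::'a::euclidean_space) \<le> R + 1"
  shows "x \<in> support_box R"
  unfolding support_box_def mem_box
proof (intro ballI conjI)
  fix i :: 'a assume i: "i \<in> Basis"
  have "\<bar>x \<bullet> i\<bar> \<le> norm x" using Basis_le_norm[OF i] by simp
  then show "(-(R+1) *\<^sub>R One) \<bullet> i \<le> x \<bullet> i" "x \<bullet> i \<le> ((R+1) *\<^sub>R One) \<bullet> i"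
    using i assms by auto
qed

lemma lborel_has_integral_support_box:
  fixes g :: "'a::euclidean_space \<Rightarrow> real"
  assumes "integrable lborel g" and "\<And>x. R < norm x \<Longrightarrow> g x = 0"
  shows "(g has_integral (LINT x|lborel. g x)) (support_box R)"
proof -
  have "g x = 0" if "x \<notin> support_box R" for x
    using that mem_support_box[of x R] assms(2) by force
  then have "(\<lambda>x. if x \<in> support_box R then g x else 0) = g" by auto
  then show ?thesis
    using has_integral_integral_lborel[OF assms(1)] has_integral_restrict_UNIV[of "support_box R" g] by simp
qed

lemma integral_support_box_translate:
  fixes g :: "'a::euclidean_space \<Rightarrow> real"
  assumes supp: "\<And>x. R < norm x \<Longrightarrow> g x = 0" and v: "norm v \<le> 1"
  shows "integral (support_box R) (\<lambda>x. g (x + v)) = integral UNIV g"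
proof -
  obtain lo hi :: 'a where box: "support_box R = cbox lo hi" unfolding support_box_def by blast
  have "integral (cbox lo hi) (\<lambda>x. g (x + v)) = integral (cbox (lo + v) (hi + v)) g"
    using integral_shift_cbox[of "lo + v" v "hi + v" g] by simp
  also have "\<dots> = integral UNIV g"
  proof (rule integral_eq_integral_UNIV_if_vanishing)
    fix x assume x: "x \<notin> cbox (lo + v) (hi + v)"
    show "g x = 0"
    proof (rule supp, rule ccontr)
      assume "\<not> R < norm x"
      then have "norm (x - v) \<le> R + 1" using norm_triangle_ineq4[of x v] v by auto
      then have "x - v \<in> cbox lo hi" using mem_support_box box by metis
      then have "x \<in> cbox (lo + v) (hi + v)"
        unfolding mem_box by (auto simp: inner_diff_left inner_add_left)
      then show False using x by simp
    qed
  qed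
  finally show ?thesis unfolding box .
qed

(* Over the box, s \<mapsto> int g (x + s v) is constant for |s| < 1; differentiate it at s = 0
   under the integral sign. *)
lemma integral_directional_derivative_eq_0:
  fixes g :: "'a::euclidean_space \<Rightarrow> real" and G :: "'a \<Rightarrow> 'a \<Rightarrow> real"
  assumes g: "\<And>x. (g has_derivative G x) (at x)"
    and G: "continuous_on UNIV (\<lambda>x. G x v)" and v: "norm v \<le> 1"
    and supp: "\<And>x. R < norm x \<Longrightarrow> g x = 0"
  shows "integral (support_box R) (\<lambda>x. G x v) = 0"
proof -
  obtain lo hi :: 'a where box: "support_box R = cbox lo hi" unfolding support_box_def by blast
  have g_cont: "continuous_on UNIV g"
    using g by (meson continuous_on_eq_continuous_within has_derivative_continuous)
  have shift_deriv: "((\<lambda>s. g (x + s *\<^sub>R v)) has_field_derivative G (x + s *\<^sub>R v) v) (at s within ball 0 1)"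
    for s x
  proof -
    have "((\<lambda>s. x + s *\<^sub>R v) has_derivative (\<lambda>h. h *\<^sub>R v)) (at s within ball 0 1)"
      by (auto intro!: derivative_eq_intros)
    from has_derivative_compose[OF this g]
    have "((\<lambda>s. g (x + s *\<^sub>R v)) has_derivative (\<lambda>h. G (x + s *\<^sub>R v) (h *\<^sub>R v))) (at s within ball 0 1)" .
    moreover have "(\<lambda>h. G (x + s *\<^sub>R v) (h *\<^sub>R v)) = (*) (G (x + s *\<^sub>R v) v)"
      using linear_scale[OF has_derivative_linear[OF g]] by (auto simp: mult.commute)
    ultimately show ?thesis unfolding has_field_derivative_def by simp
  qed
  have "((\<lambda>s. integral (cbox lo hi) (\<lambda>x. g (x + s *\<^sub>R v))) has_field_derivative
      integral (cbox lo hi) (\<lambda>x. G (x + 0 *\<^sub>R v) v)) (at 0 within ball 0 1)"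
  proof (rule leibniz_rule_field_derivative[OF shift_deriv])
    show "(\<lambda>x. g (x + s *\<^sub>R v)) integrable_on cbox lo hi" for s
      by (intro integrable_continuous continuous_on_compose2[OF g_cont]) (auto intro!: continuous_intros)
    have "continuous_on (ball 0 1 \<times> cbox lo hi) ((\<lambda>x. G x v) \<circ> (\<lambda>(s, x). x + s *\<^sub>R v))"
      by (intro continuous_on_compose continuous_on_subset[OF G])
        (auto simp: case_prod_beta intro!: continuous_intros)
    then show "continuous_on (ball 0 1 \<times> cbox lo hi) (\<lambda>(s, x). G (x + s *\<^sub>R v) v)"
      by (simp add: o_def case_prod_beta)
  qed auto
  then have "((\<lambda>s. integral (cbox lo hi) (\<lambda>x. g (x + s *\<^sub>R v))) has_field_derivative
      integral (cbox lo hi) (\<lambda>x. G x v)) (at 0)"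
    using at_within_open[of 0 "ball (0::real) 1"] by simp
  moreover have "((\<lambda>s. integral (cbox lo hi) (\<lambda>x. g (x + s *\<^sub>R v))) has_field_derivative 0) (at 0)"
  proof (rule has_field_derivative_transform_within_open[of "\<lambda>_. integral UNIV g" 0 0 "ball 0 1"])
    show "integral UNIV g = integral (cbox lo hi) (\<lambda>x. g (x + s *\<^sub>R v))" if "s \<in> ball 0 1" for s
      using integral_support_box_translate[where g=g and R=R and v="s *\<^sub>R v", OF supp] that v box
      by (simp add: mult_le_one)
  qed auto
  ultimately show ?thesis using box DERIV_unique by metis
qed

lemma young_inner_weighted:
  fixes p q :: "'a::real_inner" and c r :: real
  assumes "c > 0" "r \<ge> 0"
  shows "2 * (r * (p \<bullet> q)) \<le> c * (r * (norm p)\<^sup>2) + r * (norm q)\<^sup>2 / c"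
proof -
  have "0 \<le> (c *\<^sub>R p - q) \<bullet> (c *\<^sub>R p - q)" by simp
  also have "\<dots> = c\<^sup>2 * (p \<bullet> p) - 2 * c * (p \<bullet> q) + q \<bullet> q"
    by (simp add: inner_diff_left inner_diff_right inner_commute[of q p] power2_eq_square algebra_simps)
  finally have "2 * c * (p \<bullet> q) \<le> c\<^sup>2 * (norm p)\<^sup>2 + (norm q)\<^sup>2"
    by (simp add: power2_norm_eq_inner)
  then have "2 * (p \<bullet> q) \<le> c * (norm p)\<^sup>2 + (norm q)\<^sup>2 / c"
    using assms(1) by (simp add: field_simps power2_eq_square)
  from mult_left_mono[OF this assms(2)] show ?thesis by (simp add: algebra_simps)
qed

lemma inner_alignment_symmetrized:
  fixes p q v :: "'a::real_inner" and c :: real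
  shows "c * ((p - v) \<bullet> (q - p)) + c * ((q - v) \<bullet> (p - q)) = - c * ((q - p) \<bullet> (q - p))"
proof -
  have "(p - v) \<bullet> (q - p) + (q - v) \<bullet> (p - q) = - ((q - p) \<bullet> (q - p))"
    by (simp add: inner_diff_left inner_diff_right inner_commute)
  then show ?thesis by (metis distrib_left mult_minus_right mult_minus_left)
qed

lemma lborel_iterated_integral_nonpos_by_symmetry:
  fixes k :: "'a::euclidean_space \<times> 'a \<Rightarrow> real"
  assumes k: "continuous_on UNIV k" and S: "compact S" and supp: "\<And>z. z \<notin> S \<times> S \<Longrightarrow> k z = 0"
    and sym: "\<And>x y. k (x, y) + k (y, x) \<le> 0"
  shows "integrable lborel (\<lambda>x. LINT y|lborel. k (x, y))"
    and "(LINT x|lborel. LINT y|lborel. k (x, y)) \<le> 0"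
proof -
  define k' where "k' z = k (snd z, fst z)" for z
  have k'_cont: "continuous_on UNIV k'"
    unfolding k'_def by (rule continuous_on_compose2[OF k]) (auto intro!: continuous_intros)
  have supp': "k' z = 0" if "z \<notin> S \<times> S" for z
    using that supp[of "(snd z, fst z)"] by (cases z) (auto simp: k'_def)
  have "integrable (lborel \<Otimes>\<^sub>M lborel) k" "integrable (lborel \<Otimes>\<^sub>M lborel) k'"
    unfolding lborel_prod using supp supp'
    by (auto intro!: integrable_continuous_compact_support[OF _ compact_Times[OF S S]] k k'_cont)
  note int_k = this(1) and int_k' = this(2)
  have slices: "integrable lborel (\<lambda>y. k (x, y))" "integrable lborel (\<lambda>y. k (y, x))" for x
    by (rule integrable_continuous_compact_support[OF continuous_on_compose2[OF k] S];
        auto intro!: continuous_intros supp)+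
  show int: "integrable lborel (\<lambda>x. LINT y|lborel. k (x, y))"
    using lborel_pair.integrable_fst'[OF int_k] by simp
  have int': "integrable lborel (\<lambda>x. LINT y|lborel. k (y, x))"
    using lborel_pair.integrable_fst'[OF int_k'] by (simp add: k'_def)
  have "(LINT x|lborel. LINT y|lborel. k (y, x)) = (LINT x|lborel. LINT y|lborel. k (x, y))"
    using lborel_pair.Fubini_integral[of "\<lambda>x y. k (x, y)"] int_k by simp
  then have "2 * (LINT x|lborel. LINT y|lborel. k (x, y))
      = (LINT x|lborel. (LINT y|lborel. k (x, y)) + (LINT y|lborel. k (y, x)))"
    using int int' by simp
  also have "\<dots> = (LINT x|lborel. LINT y|lborel. k (x, y) + k (y, x))"
    using slices by simp
  also have "\<dots> \<le> 0"
    by (intro integral_nonpos sym)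
  finally show "(LINT x|lborel. LINT y|lborel. k (x, y)) \<le> 0" by simp
qed

(* p1 and p2 are the continuity and momentum equations at one point, written through the
   partial derivatives Rt, Rx of the density r and Ut, Ux of the velocity u. *)
lemma energy_balance_algebra:
  fixes r Rt :: real and u vb Ut Q F :: "'a::euclidean_space" and Rx :: "'a \<Rightarrow> real" and Ux :: "'a \<Rightarrow> 'a"
  assumes p1: "Rt + (\<Sum>b\<in>Basis. (r *\<^sub>R Ux b + Rx b *\<^sub>R u) \<bullet> b) = 0"
    and p2: "r *\<^sub>R Ut + Rt *\<^sub>R u + (\<Sum>b\<in>Basis. (r * (u \<bullet> b)) *\<^sub>R Ux b + (Rx b * (u \<bullet> b) + r * (Ux b \<bullet> b)) *\<^sub>R u) = Q + r *\<^sub>R F"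
  shows "Rt * ((u - vb) \<bullet> (u - vb)) + 2 * r * ((u - vb) \<bullet> Ut)
    = - (\<Sum>b\<in>Basis. (Rx b * (u \<bullet> b) + r * (Ux b \<bullet> b)) * ((u - vb) \<bullet> (u - vb)) + r * (u \<bullet> b) * (2 * ((u - vb) \<bullet> Ux b)))
      + 2 * ((u - vb) \<bullet> Q) + 2 * r * ((u - vb) \<bullet> F)"
proof -
  define w where "w = u - vb"
  define S1 where "S1 = (\<Sum>b\<in>Basis. Rx b * (u \<bullet> b) + r * (Ux b \<bullet> b))"
  define S2 where "S2 = (\<Sum>b\<in>Basis. r * (u \<bullet> b) * (w \<bullet> Ux b))"
  have e1: "Rt = - S1" using p1 unfolding S1_def by (simp add: inner_add_left algebra_simps sum.distrib)
  have "w \<bullet> (r *\<^sub>R Ut + Rt *\<^sub>R u + (\<Sum>b\<in>Basis. (r * (u \<bullet> b)) *\<^sub>R Ux b + (Rx b * (u \<bullet> b) + r * (Ux b \<bullet> b)) *\<^sub>R u))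
     = r * (w \<bullet> Ut) + Rt * (w \<bullet> u) + S2 + S1 * (w \<bullet> u)"
    unfolding S1_def S2_def
    by (simp add: inner_add_right inner_sum_right sum.distrib sum_distrib_right sum_distrib_left
        algebra_simps)
  then have e2: "r * (w \<bullet> Ut) + Rt * (w \<bullet> u) + S2 + S1 * (w \<bullet> u) = w \<bullet> Q + r * (w \<bullet> F)"
    using p2 by (simp add: inner_add_right)
  have e3: "(\<Sum>b\<in>Basis. (Rx b * (u \<bullet> b) + r * (Ux b \<bullet> b)) * (w \<bullet> w) + r * (u \<bullet> b) * (2 * (w \<bullet> Ux b)))
     = S1 * (w \<bullet> w) + 2 * S2"
    unfolding S1_def S2_def by (simp add: sum.distrib sum_distrib_right sum_distrib_left algebra_simps)
  show ?thesis unfolding w_def[symmetric] e3 using e1 e2 by (simp add: algebra_simps)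
qed

definition kinetic_energy ::
  "(real \<Rightarrow> 'a::euclidean_space \<Rightarrow> real) \<Rightarrow> (real \<Rightarrow> 'a \<Rightarrow> 'a) \<Rightarrow> 'a \<Rightarrow> real \<Rightarrow> real" where
  "kinetic_energy \<rho> u vb t = (LINT x|lborel. \<rho> t x * (norm (u t x - vb))\<^sup>2)"

definition control_energy :: "(real \<Rightarrow> 'a::euclidean_space \<Rightarrow> real) \<Rightarrow> (real \<Rightarrow> 'a \<Rightarrow> 'a) \<Rightarrow> real \<Rightarrow> real" where
  "control_energy \<rho> f t = (LINT x|lborel. \<rho> t x * (norm (f t x))\<^sup>2)"

definition control_power ::
  "(real \<Rightarrow> 'a::euclidean_space \<Rightarrow> real) \<Rightarrow> (real \<Rightarrow> 'a \<Rightarrow> 'a) \<Rightarrow> (real \<Rightarrow> 'a \<Rightarrow> 'a) \<Rightarrow> 'a \<Rightarrow> real \<Rightarrow> real" where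
  "control_power \<rho> u f vb t = (LINT x|lborel. \<rho> t x * ((u t x - vb) \<bullet> f t x))"

locale euler_solution =
  fixes \<Psi> :: "'a::euclidean_space \<Rightarrow> 'a \<Rightarrow> real" and T a :: real
    and \<rho> :: "real \<Rightarrow> 'a \<Rightarrow> real" and u f :: "real \<Rightarrow> 'a \<Rightarrow> 'a" and vb :: 'a
  assumes admissible: "admissible \<Psi> T a \<rho> u f"
    and Psi_cont: "continuous_on UNIV (\<lambda>(x,y). \<Psi> x y)"
    and Psi_sym: "\<And>x y. \<Psi> x y = \<Psi> y x"
    and Psi_nonneg: "\<And>x y. 0 \<le> \<Psi> x y"
begin

lemma a_less_T: "a < T"
  and rho_nonneg: "t \<in> {a..T} \<Longrightarrow> 0 \<le> \<rho> t x"
  and C1_rho: "C1_on ({a..T} \<times> UNIV) (\<lambda>(t,x). \<rho> t x)"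
  and C1_u: "C1_on ({a..T} \<times> UNIV) (\<lambda>(t,x). u t x)"
  and f_cont: "continuous_on ({a..T} \<times> UNIV) (\<lambda>(t,x). f t x)"
  and compact_support: "\<exists>K. compact K \<and> (\<forall>t\<in>{a..T}. closure {x. \<rho> t x \<noteq> 0} \<subseteq> K)"
  and continuity_eq: "t \<in> {a..T} \<Longrightarrow> dt a T (\<lambda>s. \<rho> s x) t + divx (\<lambda>y. \<rho> t y *\<^sub>R u t y) x = 0"
  and momentum_eq: "t \<in> {a..T} \<Longrightarrow>
    dt a T (\<lambda>s. \<rho> s x *\<^sub>R u s x) t + div_tensor (\<rho> t) (u t) x = Q1 \<Psi> \<rho> u t x + \<rho> t x *\<^sub>R f t x"
  using admissible unfolding admissible_def by auto

definition supp_radius :: real where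
  "supp_radius = (SOME R. 0 \<le> R \<and> (\<forall>t\<in>{a..T}. \<forall>x. R < norm x \<longrightarrow> \<rho> t x = 0))"

lemma supp_radius: "0 \<le> supp_radius" "t \<in> {a..T} \<Longrightarrow> supp_radius < norm x \<Longrightarrow> \<rho> t x = 0"
proof -
  obtain K where K: "compact K" "\<And>t. t \<in> {a..T} \<Longrightarrow> closure {x. \<rho> t x \<noteq> 0} \<subseteq> K"
    using compact_support by blast
  obtain R0 where R0: "\<And>x. x \<in> K \<Longrightarrow> norm x \<le> R0"
    using compact_imp_bounded[OF K(1)] unfolding bounded_iff by blast
  have "\<rho> t x = 0" if t: "t \<in> {a..T}" and x: "max R0 0 < norm x" for t x
  proof (rule ccontr)
    assume "\<rho> t x \<noteq> 0"
    then have "x \<in> K" using K(2)[OF t] closure_subset[of "{x. \<rho> t x \<noteq> 0}"] by auto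
    then show False using R0 x by (fastforce simp: max_less_iff_conj)
  qed
  then have "\<exists>R. 0 \<le> R \<and> (\<forall>t\<in>{a..T}. \<forall>x. R < norm x \<longrightarrow> \<rho> t x = 0)"
    by (intro exI[of _ "max R0 0"]) auto
  then have "0 \<le> supp_radius \<and> (\<forall>t\<in>{a..T}. \<forall>x. supp_radius < norm x \<longrightarrow> \<rho> t x = 0)"
    unfolding supp_radius_def by (rule someI_ex)
  then show "0 \<le> supp_radius" "t \<in> {a..T} \<Longrightarrow> supp_radius < norm x \<Longrightarrow> \<rho> t x = 0"
    by blast+
qed

abbreviation "D\<rho> \<equiv> C1_derivative ({a..T} \<times> UNIV) (\<lambda>(t,x). \<rho> t x)"
abbreviation "Du \<equiv> C1_derivative ({a..T} \<times> UNIV) (\<lambda>(t,x). u t x)"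
abbreviation "rho_t t x \<equiv> blinfun_apply (D\<rho> (t,x)) (1,0)"
abbreviation "rho_x t x h \<equiv> blinfun_apply (D\<rho> (t,x)) (0,h)"
abbreviation "u_t t x \<equiv> blinfun_apply (Du (t,x)) (1,0)"
abbreviation "u_x t x h \<equiv> blinfun_apply (Du (t,x)) (0,h)"
abbreviation "w t x \<equiv> u t x - vb"

lemma rho_partial_derivatives:
  assumes t: "t \<in> {a..T}"
  shows "((\<lambda>s. \<rho> s x) has_vector_derivative rho_t t x) (at t within {a..T})"
    and "((\<lambda>y. \<rho> t y) has_derivative (\<lambda>h. rho_x t x h)) (at x)"
  using has_derivative_Times_partials[OF C1_derivative(1)[OF C1_rho] t] t by auto

lemma u_partial_derivatives:
  assumes t: "t \<in> {a..T}"
  shows "((\<lambda>s. u s x) has_vector_derivative u_t t x) (at t within {a..T})"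
    and "((\<lambda>y. u t y) has_derivative (\<lambda>h. u_x t x h)) (at x)"
  using has_derivative_Times_partials[OF C1_derivative(1)[OF C1_u] t] t by auto

lemma rho_time_derivative:
  "t \<in> {a..T} \<Longrightarrow> ((\<lambda>s. \<rho> s x) has_field_derivative rho_t t x) (at t within {a..T})"
  using rho_partial_derivatives(1) by (simp add: has_real_derivative_iff_has_vector_derivative)

lemma continuous_on_slice [continuous_intros]:
  assumes t: "t \<in> {a..T}" and g: "continuous_on S g"
  shows "continuous_on S (\<lambda>z. \<rho> t (g z))" and "continuous_on S (\<lambda>z. u t (g z))"
    and "continuous_on S (\<lambda>z. f t (g z))" and "continuous_on S (\<lambda>z. rho_x t (g z) h)"
    and "continuous_on S (\<lambda>z. u_x t (g z) h)"
proof -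
  have slice: "continuous_on S (\<lambda>z. H (t, g z))" if "continuous_on ({a..T} \<times> UNIV) H"
    for H :: "real \<times> 'a \<Rightarrow> 'c::topological_space"
    by (rule continuous_on_compose2[OF that]) (use t g in \<open>auto intro!: continuous_intros\<close>)
  have D: "continuous_on ({a..T} \<times> UNIV) (\<lambda>z. blinfun_apply (D\<rho> z) (0,h))"
    "continuous_on ({a..T} \<times> UNIV) (\<lambda>z. blinfun_apply (Du z) (0,h))"
    using C1_derivative(2)[OF C1_rho] C1_derivative(2)[OF C1_u] by (auto intro!: continuous_intros)
  show "continuous_on S (\<lambda>z. \<rho> t (g z))" "continuous_on S (\<lambda>z. u t (g z))"
    "continuous_on S (\<lambda>z. f t (g z))" "continuous_on S (\<lambda>z. rho_x t (g z) h)"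
    "continuous_on S (\<lambda>z. u_x t (g z) h)"
    using slice[OF C1_on_imp_continuous_on[OF C1_rho]] slice[OF C1_on_imp_continuous_on[OF C1_u]]
      slice[OF f_cont] slice[OF D(1)] slice[OF D(2)] by simp_all
qed

lemma continuous_on_Psi [continuous_intros]:
  "continuous_on S g \<Longrightarrow> continuous_on S h \<Longrightarrow> continuous_on S (\<lambda>z. \<Psi> (g z) (h z))"
  using continuous_on_compose2[OF Psi_cont, of S "\<lambda>z. (g z, h z)"] by (auto intro!: continuous_intros)

lemma dt_rho_eq: "t \<in> {a..T} \<Longrightarrow> dt a T (\<lambda>s. \<rho> s x) t = rho_t t x"
  unfolding dt_def by (rule vector_derivative_within_closed_interval[OF a_less_T _ rho_partial_derivatives(1)])

lemma dt_momentum_eq: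
  "t \<in> {a..T} \<Longrightarrow> dt a T (\<lambda>s. \<rho> s x *\<^sub>R u s x) t = \<rho> t x *\<^sub>R u_t t x + rho_t t x *\<^sub>R u t x"
  unfolding dt_def
  by (rule vector_derivative_within_closed_interval[OF a_less_T _
        has_vector_derivative_scaleR[OF rho_time_derivative u_partial_derivatives(1)]])

lemma divx_mass_flux_eq:
  assumes t: "t \<in> {a..T}"
  shows "divx (\<lambda>y. \<rho> t y *\<^sub>R u t y) x = (\<Sum>b\<in>Basis. (\<rho> t x *\<^sub>R u_x t x b + rho_x t x b *\<^sub>R u t x) \<bullet> b)"
proof -
  have "((\<lambda>y. \<rho> t y *\<^sub>R u t y) has_derivative (\<lambda>h. \<rho> t x *\<^sub>R u_x t x h + rho_x t x h *\<^sub>R u t x)) (at x)"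
    by (rule has_derivative_scaleR[OF rho_partial_derivatives(2)[OF t] u_partial_derivatives(2)[OF t]])
  then show ?thesis unfolding divx_def by (simp add: frechet_derivative_at[symmetric])
qed

lemma div_tensor_eq:
  assumes t: "t \<in> {a..T}"
  shows "div_tensor (\<rho> t) (u t) x = (\<Sum>b\<in>Basis. (\<rho> t x * (u t x \<bullet> b)) *\<^sub>R u_x t x b
    + (rho_x t x b * (u t x \<bullet> b) + \<rho> t x * (u_x t x b \<bullet> b)) *\<^sub>R u t x)"
proof -
  have "((\<lambda>y. (\<rho> t y * (u t y \<bullet> b)) *\<^sub>R u t y) has_derivative (\<lambda>h. (\<rho> t x * (u t x \<bullet> b)) *\<^sub>R u_x t x h
      + (\<rho> t x * (u_x t x h \<bullet> b) + rho_x t x h * (u t x \<bullet> b)) *\<^sub>R u t x)) (at x)" for b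
    by (intro has_derivative_scaleR has_derivative_mult has_derivative_inner_left
        rho_partial_derivatives(2)[OF t] u_partial_derivatives(2)[OF t])
  note fd = frechet_derivative_at[OF this, symmetric]
  show ?thesis unfolding div_tensor_def
    by (intro sum.cong refl) (simp only: fd, simp add: algebra_simps)
qed

(* Derivative along b of the energy flux \<rho> (u \<bullet> b) |u - vb|^2. *)
definition energy_flux_deriv :: "real \<Rightarrow> 'a \<Rightarrow> 'a \<Rightarrow> real" where
  "energy_flux_deriv t x b = (rho_x t x b * (u t x \<bullet> b) + \<rho> t x * (u_x t x b \<bullet> b)) * (w t x \<bullet> w t x)
     + \<rho> t x * (u t x \<bullet> b) * (2 * (w t x \<bullet> u_x t x b))"

lemma energy_density_balance:
  assumes t: "t \<in> {a..T}"
  shows "rho_t t x * (w t x \<bullet> w t x) + 2 * \<rho> t x * (w t x \<bullet> u_t t x)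
    = - (\<Sum>b\<in>Basis. energy_flux_deriv t x b) + 2 * (w t x \<bullet> Q1 \<Psi> \<rho> u t x) + 2 * \<rho> t x * (w t x \<bullet> f t x)"
  unfolding energy_flux_deriv_def
proof (rule energy_balance_algebra)
  show "rho_t t x + (\<Sum>b\<in>Basis. (\<rho> t x *\<^sub>R u_x t x b + rho_x t x b *\<^sub>R u t x) \<bullet> b) = 0"
    using continuity_eq[OF t, of x] by (simp add: dt_rho_eq[OF t] divx_mass_flux_eq[OF t])
  show "\<rho> t x *\<^sub>R u_t t x + rho_t t x *\<^sub>R u t x + (\<Sum>b\<in>Basis. (\<rho> t x * (u t x \<bullet> b)) *\<^sub>R u_x t x b
      + (rho_x t x b * (u t x \<bullet> b) + \<rho> t x * (u_x t x b \<bullet> b)) *\<^sub>R u t x)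
    = Q1 \<Psi> \<rho> u t x + \<rho> t x *\<^sub>R f t x"
    using momentum_eq[OF t, of x] by (simp add: dt_momentum_eq[OF t] div_tensor_eq[OF t])
qed

lemma energy_flux_deriv_has_integral_0:
  assumes t: "t \<in> {a..T}"
  shows "((\<lambda>x. \<Sum>b\<in>Basis. energy_flux_deriv t x b) has_integral 0) (support_box supp_radius)"
proof -
  have "((\<lambda>x. energy_flux_deriv t x b) has_integral 0) (support_box supp_radius)" if b: "b \<in> Basis" for b
  proof -
    define g where "g x = \<rho> t x * (u t x \<bullet> b) * (w t x \<bullet> w t x)" for x
    define G where "G x h = (rho_x t x h * (u t x \<bullet> b) + \<rho> t x * (u_x t x h \<bullet> b)) * (w t x \<bullet> w t x)
      + \<rho> t x * (u t x \<bullet> b) * (2 * (w t x \<bullet> u_x t x h))" for x h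
    have "(g has_derivative G x) (at x)" for x
    proof -
      have "((\<lambda>x. w t x \<bullet> w t x) has_derivative (\<lambda>h. 2 * (w t x \<bullet> u_x t x h))) (at x)"
        using u_partial_derivatives(2)[OF t]
        by (auto intro!: derivative_eq_intros simp: inner_commute)
      from has_derivative_mult[OF has_derivative_mult[OF rho_partial_derivatives(2)[OF t]
            has_derivative_inner_left[OF u_partial_derivatives(2)[OF t]]] this]
      show ?thesis unfolding g_def G_def
        by (rule has_derivative_eq_rhs) (auto simp: algebra_simps)
    qed
    moreover have "continuous_on UNIV (\<lambda>x. G x b)"
      unfolding G_def using t by (auto intro!: continuous_intros)
    moreover have "g x = 0" if "supp_radius < norm x" for x
      using supp_radius(2)[OF t that] by (simp add: g_def)
    ultimately have "integral (support_box supp_radius) (\<lambda>x. G x b) = 0"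
      using b by (intro integral_directional_derivative_eq_0[where g=g]) simp_all
    moreover have "(\<lambda>x. G x b) integrable_on support_box supp_radius"
      unfolding support_box_def G_def using t by (auto intro!: integrable_continuous continuous_intros)
    ultimately have "((\<lambda>x. G x b) has_integral 0) (support_box supp_radius)"
      using integrable_integral by fastforce
    moreover have "(\<lambda>x. G x b) = (\<lambda>x. energy_flux_deriv t x b)"
      unfolding G_def energy_flux_deriv_def ..
    ultimately show ?thesis by simp
  qed
  then show ?thesis using has_integral_sum[of Basis "\<lambda>b x. energy_flux_deriv t x b" "\<lambda>_. 0"] by simp
qed

lemma alignment_integral_nonpos:
  assumes t: "t \<in> {a..T}"
  shows "integrable lborel (\<lambda>x. w t x \<bullet> Q1 \<Psi> \<rho> u t x)"
    and "(LINT x|lborel. w t x \<bullet> Q1 \<Psi> \<rho> u t x) \<le> 0"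
proof -
  define k where "k z = \<Psi> (fst z) (snd z) * \<rho> t (fst z) * \<rho> t (snd z)
    * (w t (fst z) \<bullet> (u t (snd z) - u t (fst z)))" for z
  have cont: "continuous_on UNIV k"
    unfolding k_def using t by (auto intro!: continuous_intros)
  have supp: "k z = 0" if "z \<notin> cball 0 supp_radius \<times> cball 0 supp_radius" for z
    using that supp_radius(2)[OF t] unfolding k_def by (cases z) (auto simp: not_le)
  have sym: "k (x, y) + k (y, x) \<le> 0" for x y
  proof -
    have "k (x, y) + k (y, x) = - (\<Psi> x y * \<rho> t x * \<rho> t y) * ((u t y - u t x) \<bullet> (u t y - u t x))"
      unfolding k_def using inner_alignment_symmetrized[of "\<Psi> x y * \<rho> t x * \<rho> t y" "u t x" vb "u t y"]
      by (simp add: Psi_sym[of y x] mult_ac)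
    also have "\<dots> \<le> 0"
      using Psi_nonneg[of x y] rho_nonneg[OF t, of x] rho_nonneg[OF t, of y] by simp
    finally show ?thesis .
  qed
  have "w t x \<bullet> Q1 \<Psi> \<rho> u t x = (LINT y|lborel. k (x, y))" for x
  proof -
    have "integrable lborel (\<lambda>y. (\<Psi> x y * \<rho> t x * \<rho> t y) *\<^sub>R (u t y - u t x))"
      by (rule integrable_continuous_compact_support[OF _ compact_cball[of 0 supp_radius]])
        (use t supp_radius(2)[OF t] in \<open>auto intro!: continuous_intros\<close>)
    from integral_inner_right[OF this, of "w t x"] show ?thesis
      unfolding Q1_def k_def by simp
  qed
  then show "integrable lborel (\<lambda>x. w t x \<bullet> Q1 \<Psi> \<rho> u t x)"
    and "(LINT x|lborel. w t x \<bullet> Q1 \<Psi> \<rho> u t x) \<le> 0"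
    using lborel_iterated_integral_nonpos_by_symmetry[OF cont compact_cball supp sym] by simp_all
qed

lemma density_weighted_integral:
  assumes t: "t \<in> {a..T}" and h: "continuous_on UNIV h"
  shows "integrable lborel (\<lambda>x. \<rho> t x * h x)"
    and "((\<lambda>x. \<rho> t x * h x) has_integral (LINT x|lborel. \<rho> t x * h x)) (support_box supp_radius)"
proof -
  have vanish: "\<rho> t x * h x = 0" if "supp_radius < norm x" for x
    using supp_radius(2)[OF t that] by simp
  show int: "integrable lborel (\<lambda>x. \<rho> t x * h x)"
    by (rule integrable_continuous_compact_support[OF _ compact_cball[of 0 supp_radius]])
      (use t h vanish in \<open>auto intro!: continuous_intros\<close>)
  show "((\<lambda>x. \<rho> t x * h x) has_integral (LINT x|lborel. \<rho> t x * h x)) (support_box supp_radius)"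
    by (rule lborel_has_integral_support_box[OF int vanish])
qed

lemma kinetic_energy_eq_integral_box:
  assumes t: "t \<in> {a..T}"
  shows "kinetic_energy \<rho> u vb t = integral (support_box supp_radius) (\<lambda>x. \<rho> t x * (w t x \<bullet> w t x))"
proof -
  have "continuous_on UNIV (\<lambda>x. w t x \<bullet> w t x)" using t by (auto intro!: continuous_intros)
  from integral_unique[OF density_weighted_integral(2)[OF t this]] show ?thesis
    unfolding kinetic_energy_def power2_norm_eq_inner by simp
qed

lemma control_energy_eq_integral_box:
  assumes t: "t \<in> {a..T}"
  shows "control_energy \<rho> f t = integral (support_box supp_radius) (\<lambda>x. \<rho> t x * (f t x \<bullet> f t x))"
proof -
  have "continuous_on UNIV (\<lambda>x. f t x \<bullet> f t x)" using t by (auto intro!: continuous_intros)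
  from integral_unique[OF density_weighted_integral(2)[OF t this]] show ?thesis
    unfolding control_energy_def power2_norm_eq_inner by simp
qed

definition energy_rate :: "real \<Rightarrow> real" where
  "energy_rate t = integral (support_box supp_radius)
     (\<lambda>x. rho_t t x * (w t x \<bullet> w t x) + 2 * \<rho> t x * (w t x \<bullet> u_t t x))"

lemma kinetic_energy_has_derivative:
  assumes t: "t \<in> {a..T}"
  shows "(kinetic_energy \<rho> u vb has_field_derivative energy_rate t) (at t within {a..T})"
proof -
  obtain lo hi :: 'a where box: "support_box supp_radius = cbox lo hi" unfolding support_box_def by blast
  have "((\<lambda>s. integral (cbox lo hi) (\<lambda>x. \<rho> s x * (w s x \<bullet> w s x))) has_field_derivative energy_rate t)
      (at t within {a..T})"
    unfolding energy_rate_def box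
  proof (rule leibniz_rule_field_derivative[OF _ _ _ t convex_real_interval(5)])
    fix s x assume s: "s \<in> {a..T}"
    have "((\<lambda>s. w s x) has_derivative (\<lambda>h. h *\<^sub>R u_t s x)) (at s within {a..T})"
      using has_vector_derivative_diff[OF u_partial_derivatives(1)[OF s] has_vector_derivative_const[of vb]]
      unfolding has_vector_derivative_def by simp
    from has_derivative_inner[OF this this]
    have "((\<lambda>s. w s x \<bullet> w s x) has_field_derivative 2 * (w s x \<bullet> u_t s x)) (at s within {a..T})"
      unfolding has_field_derivative_def
      by (rule has_derivative_eq_rhs) (auto simp: inner_commute algebra_simps)
    from DERIV_mult[OF rho_time_derivative[OF s] this]
    show "((\<lambda>s. \<rho> s x * (w s x \<bullet> w s x)) has_field_derivative
        rho_t s x * (w s x \<bullet> w s x) + 2 * \<rho> s x * (w s x \<bullet> u_t s x)) (at s within {a..T})"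
      by (rule DERIV_cong) (simp add: algebra_simps)
  next
    show "(\<lambda>x. \<rho> s x * (w s x \<bullet> w s x)) integrable_on cbox lo hi" if "s \<in> {a..T}" for s
      using that by (auto intro!: integrable_continuous continuous_intros)
  next
    have "continuous_on ({a..T} \<times> UNIV) (\<lambda>z. blinfun_apply (D\<rho> z) (1,0)
        * (((\<lambda>(t,x). u t x) z - vb) \<bullet> ((\<lambda>(t,x). u t x) z - vb))
        + 2 * (\<lambda>(t,x). \<rho> t x) z * (((\<lambda>(t,x). u t x) z - vb) \<bullet> blinfun_apply (Du z) (1,0)))"
      using C1_derivative(2)[OF C1_rho] C1_derivative(2)[OF C1_u]
        C1_on_imp_continuous_on[OF C1_rho] C1_on_imp_continuous_on[OF C1_u]
      by (intro continuous_intros) auto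
    then have "continuous_on ({a..T} \<times> UNIV)
        (\<lambda>(s, x). rho_t s x * (w s x \<bullet> w s x) + 2 * \<rho> s x * (w s x \<bullet> u_t s x))"
      by (simp add: case_prod_beta)
    then show "continuous_on ({a..T} \<times> cbox lo hi)
        (\<lambda>(s, x). rho_t s x * (w s x \<bullet> w s x) + 2 * \<rho> s x * (w s x \<bullet> u_t s x))"
      by (rule continuous_on_subset) auto
  qed
  then show ?thesis
    by (rule has_field_derivative_transform_within[OF _ zero_less_one t])
      (simp add: kinetic_energy_eq_integral_box box)
qed

lemma energy_rate_le_power:
  assumes t: "t \<in> {a..T}"
  shows "energy_rate t \<le> 2 * control_power \<rho> u f vb t"
proof -
  define A where "A = (LINT x|lborel. w t x \<bullet> Q1 \<Psi> \<rho> u t x)"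
  have "((\<lambda>x. w t x \<bullet> Q1 \<Psi> \<rho> u t x) has_integral A) (support_box supp_radius)"
    unfolding A_def
  proof (rule lborel_has_integral_support_box[OF alignment_integral_nonpos(1)[OF t]])
    show "w t x \<bullet> Q1 \<Psi> \<rho> u t x = 0" if "supp_radius < norm x" for x
      using supp_radius(2)[OF t that] by (simp add: Q1_def)
  qed
  moreover have "((\<lambda>x. \<rho> t x * (w t x \<bullet> f t x)) has_integral control_power \<rho> u f vb t) (support_box supp_radius)"
    unfolding control_power_def using t by (intro density_weighted_integral(2)) (auto intro!: continuous_intros)
  ultimately have "((\<lambda>x. - (\<Sum>b\<in>Basis. energy_flux_deriv t x b) + 2 * (w t x \<bullet> Q1 \<Psi> \<rho> u t x)
      + 2 * (\<rho> t x * (w t x \<bullet> f t x))) has_integral (- 0 + 2 * A + 2 * control_power \<rho> u f vb t))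
      (support_box supp_radius)"
    by (intro has_integral_add has_integral_neg has_integral_mult_right energy_flux_deriv_has_integral_0[OF t])
  then have "energy_rate t = 2 * A + 2 * control_power \<rho> u f vb t"
    unfolding energy_rate_def energy_density_balance[OF t] by (simp add: integral_unique mult.assoc)
  with alignment_integral_nonpos(2)[OF t] show ?thesis unfolding A_def by simp
qed

lemma kinetic_energy_continuous: "continuous_on {a..T} (kinetic_energy \<rho> u vb)"
  using kinetic_energy_has_derivative DERIV_continuous continuous_on_eq_continuous_within by blast

lemma control_energy_continuous: "continuous_on {a..T} (control_energy \<rho> f)"
proof -
  obtain lo hi :: 'a where box: "support_box supp_radius = cbox lo hi" unfolding support_box_def by blast
  have "continuous_on ({a..T} \<times> UNIV) (\<lambda>z. (\<lambda>(t,x). \<rho> t x) z * ((\<lambda>(t,x). f t x) z \<bullet> (\<lambda>(t,x). f t x) z))"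
    using C1_on_imp_continuous_on[OF C1_rho] f_cont by (intro continuous_intros)
  then have "continuous_on ({a..T} \<times> UNIV) (\<lambda>(t,x). \<rho> t x * (f t x \<bullet> f t x))"
    by (simp add: case_prod_beta)
  then have "continuous_on ({a..T} \<times> cbox lo hi) (\<lambda>(t,x). \<rho> t x * (f t x \<bullet> f t x))"
    by (rule continuous_on_subset) auto
  from integral_continuous_on_param[OF this]
  show ?thesis by (rule continuous_on_eq) (simp add: control_energy_eq_integral_box box)
qed

lemma kinetic_energy_nonneg: "t \<in> {a..T} \<Longrightarrow> 0 \<le> kinetic_energy \<rho> u vb t"
  unfolding kinetic_energy_def using rho_nonneg by (intro Bochner_Integration.integral_nonneg) simp

lemma control_energy_nonneg: "t \<in> {a..T} \<Longrightarrow> 0 \<le> control_energy \<rho> f t"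
  unfolding control_energy_def using rho_nonneg by (intro Bochner_Integration.integral_nonneg) simp

lemma control_power_le:
  assumes t: "t \<in> {a..T}" and c: "c > 0"
  shows "2 * control_power \<rho> u f vb t \<le> c * kinetic_energy \<rho> u vb t + control_energy \<rho> f t / c"
proof -
  have int: "integrable lborel (\<lambda>x. \<rho> t x * (w t x \<bullet> f t x))"
    "integrable lborel (\<lambda>x. \<rho> t x * (norm (w t x))\<^sup>2)" "integrable lborel (\<lambda>x. \<rho> t x * (norm (f t x))\<^sup>2)"
    using t by (auto intro!: density_weighted_integral(1) continuous_intros)
  have "2 * control_power \<rho> u f vb t = (LINT x|lborel. 2 * (\<rho> t x * (w t x \<bullet> f t x)))"
    unfolding control_power_def by simp
  also have "\<dots> \<le> (LINT x|lborel. c * (\<rho> t x * (norm (w t x))\<^sup>2) + \<rho> t x * (norm (f t x))\<^sup>2 / c)"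
    using int young_inner_weighted[OF c rho_nonneg[OF t]] by (intro integral_mono) auto
  also have "\<dots> = c * kinetic_energy \<rho> u vb t + control_energy \<rho> f t / c"
    unfolding kinetic_energy_def control_energy_def using int by simp
  finally show ?thesis .
qed

lemma feedback_energies:
  assumes fb: "\<And>t x. t \<in> {a..T} \<Longrightarrow> f t x = - c *\<^sub>R (u t x - vb)" and t: "t \<in> {a..T}"
  shows "control_power \<rho> u f vb t = - c * kinetic_energy \<rho> u vb t"
    and "control_energy \<rho> f t = c\<^sup>2 * kinetic_energy \<rho> u vb t"
proof -
  have "control_power \<rho> u f vb t = (LINT x|lborel. - c * (\<rho> t x * (norm (u t x - vb))\<^sup>2))"
    unfolding control_power_def using fb[OF t]
    by (intro Bochner_Integration.integral_cong) (auto simp: power2_norm_eq_inner)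
  then show "control_power \<rho> u f vb t = - c * kinetic_energy \<rho> u vb t"
    unfolding kinetic_energy_def by simp
  have "control_energy \<rho> f t = (LINT x|lborel. c\<^sup>2 * (\<rho> t x * (norm (u t x - vb))\<^sup>2))"
    unfolding control_energy_def using fb[OF t]
    by (intro Bochner_Integration.integral_cong) (auto simp: power_mult_distrib)
  then show "control_energy \<rho> f t = c\<^sup>2 * kinetic_energy \<rho> u vb t"
    unfolding kinetic_energy_def by simp
qed

lemma cost_eq_integral:
  assumes a': "a \<le> a'"
  shows "cost lam vb T a' \<rho> u f = integral {a'..T} (\<lambda>t. kinetic_energy \<rho> u vb t + lam * control_energy \<rho> f t)"
proof -
  let ?L = "\<lambda>t. kinetic_energy \<rho> u vb t + lam * control_energy \<rho> f t"
  have "(LINT x|lborel. \<rho> t x * (norm (u t x - vb))\<^sup>2 + lam * \<rho> t x * (norm (f t x))\<^sup>2) = ?L t"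
    if "t \<in> {a'..T}" for t
  proof -
    have t: "t \<in> {a..T}" using that a' by auto
    have "integrable lborel (\<lambda>x. \<rho> t x * (norm (u t x - vb))\<^sup>2)"
      "integrable lborel (\<lambda>x. \<rho> t x * (norm (f t x))\<^sup>2)"
      using t by (auto intro!: density_weighted_integral(1) continuous_intros)
    then show ?thesis
      unfolding kinetic_energy_def control_energy_def by (simp add: mult.assoc)
  qed
  then have "cost lam vb T a' \<rho> u f = (LINT t:{a'..T}|lborel. ?L t)"
    unfolding cost_def by (intro set_lebesgue_integral_cong) auto
  also have "\<dots> = integral {a'..T} ?L"
  proof (rule set_borel_integral_eq_integral(2))
    have "continuous_on {a'..T} ?L"
      using a' by (intro continuous_intros continuous_on_subset[OF kinetic_energy_continuous]
          continuous_on_subset[OF control_energy_continuous]) auto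
    then show "set_integrable lborel {a'..T} ?L"
      by (rule borel_integrable_atLeastAtMost')
  qed
  finally show ?thesis .
qed

lemma feedback_cost_le:
  assumes lam: "lam > 0"
    and fb: "\<And>t x. t \<in> {a..T} \<Longrightarrow> f t x = - (1 / sqrt lam) *\<^sub>R (u t x - vb)"
  shows "cost lam vb T a \<rho> u f \<le> sqrt lam * kinetic_energy \<rho> u vb a"
proof -
  define c where "c = 1 / sqrt lam"
  have c: "c > 0" using lam by (simp add: c_def)
  note fb_c = fb[folded c_def]
  let ?E = "kinetic_energy \<rho> u vb"
  have "?E T + 2 * c * integral {a..T} ?E \<le> ?E a + 2 * c * integral {a..a} ?E"
  proof (rule DERIV_within_Icc_nonpos_imp_decreasing[where g="\<lambda>t. ?E t + 2 * c * integral {a..t} ?E"])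
    show "a \<le> T" using a_less_T by simp
    fix t assume t: "t \<in> {a..T}"
    show "((\<lambda>t. ?E t + 2 * c * integral {a..t} ?E) has_real_derivative energy_rate t + 2 * c * ?E t)
        (at t within {a..T})"
      by (intro DERIV_add DERIV_cmult kinetic_energy_has_derivative[OF t]
          integral_has_real_derivative[OF kinetic_energy_continuous t])
    show "energy_rate t + 2 * c * ?E t \<le> 0"
      using energy_rate_le_power[OF t] feedback_energies(1)[OF fb_c t] by simp
  qed
  then have "2 * c * integral {a..T} ?E \<le> ?E a"
    using kinetic_energy_nonneg[of T] a_less_T by simp
  then have "2 * integral {a..T} ?E \<le> sqrt lam * ?E a"
    using c lam by (simp add: c_def field_simps)
  moreover have "cost lam vb T a \<rho> u f = integral {a..T} (\<lambda>t. 2 * ?E t)"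
  proof -
    have "cost lam vb T a \<rho> u f = integral {a..T} (\<lambda>t. ?E t + lam * control_energy \<rho> f t)"
      by (rule cost_eq_integral) simp
    also have "\<dots> = integral {a..T} (\<lambda>t. 2 * ?E t)"
    proof (rule integral_cong)
      fix t assume "t \<in> {a..T}"
      from feedback_energies(2)[OF fb_c this]
      have "lam * control_energy \<rho> f t = (lam * c\<^sup>2) * ?E t" by simp
      also have "lam * c\<^sup>2 = 1" using lam by (simp add: c_def power_divide)
      finally show "?E t + lam * control_energy \<rho> f t = 2 * ?E t" by simp
    qed
    finally show ?thesis .
  qed
  ultimately show ?thesis by simp
qed

lemma kinetic_energy_le_cost:
  assumes lam: "lam > 0" and t: "a \<le> t1" "t1 \<le> t2" "t2 \<le> T"
  shows "kinetic_energy \<rho> u vb t2 \<le> kinetic_energy \<rho> u vb t1 + cost lam vb T t1 \<rho> u f / sqrt lam"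
proof -
  let ?E = "kinetic_energy \<rho> u vb"
  let ?L = "\<lambda>t. ?E t + lam * control_energy \<rho> f t"
  have L_cont: "continuous_on {t1..T} ?L"
    using t by (intro continuous_intros continuous_on_subset[OF kinetic_energy_continuous]
        continuous_on_subset[OF control_energy_continuous]) auto
  have "?E t2 - integral {t1..t2} ?L / sqrt lam \<le> ?E t1 - integral {t1..t1} ?L / sqrt lam"
  proof (rule DERIV_within_Icc_nonpos_imp_decreasing[where g="\<lambda>t. ?E t - integral {t1..t} ?L / sqrt lam"])
    show "t1 \<le> t2" by fact
    fix s assume s: "s \<in> {t1..t2}"
    then have s_aT: "s \<in> {a..T}" using t by auto
    have "(?E has_real_derivative energy_rate s) (at s within {t1..t2})"
      by (rule DERIV_subset[OF kinetic_energy_has_derivative[OF s_aT]]) (use t in auto)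
    moreover have "((\<lambda>t. integral {t1..t} ?L) has_real_derivative ?L s) (at s within {t1..t2})"
      by (rule integral_has_real_derivative[OF continuous_on_subset[OF L_cont] s]) (use t in auto)
    ultimately show "((\<lambda>t. ?E t - integral {t1..t} ?L / sqrt lam) has_real_derivative
        energy_rate s - ?L s / sqrt lam) (at s within {t1..t2})"
      by (intro DERIV_diff DERIV_cdivide)
    have "energy_rate s \<le> 2 * control_power \<rho> u f vb s"
      by (rule energy_rate_le_power[OF s_aT])
    also have "\<dots> \<le> 1 / sqrt lam * ?E s + control_energy \<rho> f s / (1 / sqrt lam)"
      using lam by (intro control_power_le[OF s_aT]) simp
    also have "\<dots> = ?L s / sqrt lam"
      using lam by (simp add: field_simps)
    finally show "energy_rate s - ?L s / sqrt lam \<le> 0" by simp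
  qed
  moreover have "integral {t1..t2} ?L \<le> integral {t1..T} ?L"
  proof (rule integral_subset_le)
    show "?L integrable_on {t1..t2}"
      by (rule integrable_continuous_interval[OF continuous_on_subset[OF L_cont]]) (use t in auto)
    show "?L integrable_on {t1..T}"
      by (rule integrable_continuous_interval[OF L_cont])
    show "\<forall>t\<in>{t1..T}. 0 \<le> ?L t"
      using t lam kinetic_energy_nonneg control_energy_nonneg by auto
  qed (use t in auto)
  moreover have "integral {t1..T} ?L = cost lam vb T t1 \<rho> u f"
    by (rule cost_eq_integral[symmetric]) fact
  ultimately have "integral {t1..t2} ?L / sqrt lam \<le> cost lam vb T t1 \<rho> u f / sqrt lam"
    using lam by (simp add: divide_right_mono)
  with \<open>?E t2 - integral {t1..t2} ?L / sqrt lam \<le> ?E t1 - integral {t1..t1} ?L / sqrt lam\<close>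
  show ?thesis by simp
qed

end

lemma C_lambda_ge_2:
  assumes "lam > 0"
  shows "2 \<le> C_lambda lam"
proof (cases "lam \<le> 1")
  case True
  then have "1 \<le> 1 / sqrt lam" using assms by (simp add: field_simps)
  then show ?thesis using True unfolding C_lambda_def by simp
next
  case False
  then show ?thesis unfolding C_lambda_def by simp
qed

theorem lemma4p3:
  fixes \<Psi> :: "'a::euclidean_space \<Rightarrow> 'a \<Rightarrow> real"
    and lam T :: real and vbar :: 'a
    and \<rho> :: "real \<Rightarrow> 'a \<Rightarrow> real" and u f :: "real \<Rightarrow> 'a \<Rightarrow> 'a"
  assumes "T > 0" and "lam > 0"
    and "\<exists>L. L-lipschitz_on UNIV (\<lambda>(x,y). \<Psi> x y)"
    and "\<And>x y. \<Psi> x y = \<Psi> y x"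
    and "\<And>x y. 0 \<le> \<Psi> x y"
    and "\<exists>M. \<forall>x y. \<Psi> x y \<le> M"
    and "optimal \<Psi> lam vbar T \<rho> u f"
    and "\<forall>a\<in>{0..<T}. \<exists>\<rho>' u' f'. admissible \<Psi> T a \<rho>' u' f' \<and> \<rho>' a = \<rho> a \<and> u' a = u a \<and>
           (\<forall>t\<in>{a..T}. \<forall>x. f' t x = - (1 / sqrt lam) *\<^sub>R (u' t x - vbar))"
    and "0 \<le> t1" and "t1 \<le> t2" and "t2 \<le> T"
  shows "(LINT x|lborel. \<rho> t2 x * (norm (u t2 x - vbar))\<^sup>2)
           \<le> C_lambda lam * (LINT x|lborel. \<rho> t1 x * (norm (u t1 x - vbar))\<^sup>2)"
proof -
  have Psi_cont: "continuous_on UNIV (\<lambda>(x,y). \<Psi> x y)"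
    using assms(3) lipschitz_on_continuous_on by blast
  have opt: "admissible \<Psi> T 0 \<rho> u f"
    "\<And>a \<rho>' u' f'. a \<in> {0..<T} \<Longrightarrow> admissible \<Psi> T a \<rho>' u' f' \<Longrightarrow> \<rho>' a = \<rho> a \<Longrightarrow> u' a = u a \<Longrightarrow>
       cost lam vbar T a \<rho> u f \<le> cost lam vbar T a \<rho>' u' f'"
    using assms(7) unfolding optimal_def by blast+
  interpret O: euler_solution \<Psi> T 0 \<rho> u f vbar
    using opt(1) Psi_cont assms(4,5) by unfold_locales
  let ?E = "kinetic_energy \<rho> u vbar"
  have "?E t2 \<le> 2 * ?E t1"
  proof (cases "t1 = t2")
    case True
    then show ?thesis using O.kinetic_energy_nonneg[of t1] assms(9-11) by simp
  next
    case False
    then have t1: "t1 \<in> {0..<T}" using assms(9-11) by auto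
    obtain \<rho>' u' f' where adm: "admissible \<Psi> T t1 \<rho>' u' f'" and init: "\<rho>' t1 = \<rho> t1" "u' t1 = u t1"
      and fb: "\<And>t x. t \<in> {t1..T} \<Longrightarrow> f' t x = - (1 / sqrt lam) *\<^sub>R (u' t x - vbar)"
      using assms(8) t1 by blast
    interpret P: euler_solution \<Psi> T t1 \<rho>' u' f' vbar
      using adm Psi_cont assms(4,5) by unfold_locales
    have "?E t2 \<le> ?E t1 + cost lam vbar T t1 \<rho> u f / sqrt lam"
      using O.kinetic_energy_le_cost[OF assms(2)] assms(9-11) by simp
    also have "\<dots> \<le> ?E t1 + cost lam vbar T t1 \<rho>' u' f' / sqrt lam"
      using opt(2)[OF t1 adm init] assms(2) by (simp add: divide_right_mono)
    also have "\<dots> \<le> ?E t1 + kinetic_energy \<rho>' u' vbar t1"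
      using P.feedback_cost_le[OF assms(2) fb] assms(2) by (simp add: pos_divide_le_eq mult.commute)
    also have "kinetic_energy \<rho>' u' vbar t1 = ?E t1"
      unfolding kinetic_energy_def using init by simp
    finally show ?thesis by simp
  qed
  moreover have "2 * ?E t1 \<le> C_lambda lam * ?E t1"
    by (rule mult_right_mono[OF C_lambda_ge_2[OF assms(2)] O.kinetic_energy_nonneg]) (use assms in auto)
  ultimately show ?thesis unfolding kinetic_energy_def by simp
qed

end
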